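(* Let $A:\mathbb{R}^d\rightrightarrows\mathbb{R}^d$ be maximal monotone with $A^{-1}(0)\neq\emptyset$ and $\mathrm{dom}(A)$ closed and bounded, let $p\geq1$ be an integer, $\sigma\in(0,1)$, $\theta>0$, $x_0\in\mathbb{R}^d$. Suppose sequences $\lambda_k>0$, $y_k,v_k,x_k\in\mathbb{R}^d$, $\epsilon_k\geq0$ ($k\geq1$) satisfy, for every $k\geq0$, \[ v_{k+1}\in A^{\epsilon_{k+1}}(y_{k+1}),\quad \|\lambda_{k+1}v_{k+1}+y_{k+1}-x_k\|^2+2\lambda_{k+1}\epsilon_{k+1}\leq\sigma^2\|y_{k+1}-x_k\|^2,\quad \lambda_{k+1}\|y_{k+1}-x_k\|^{p-1}\geq\theta, \] and $x_{k+1}=x_k-\lambda_{k+1}v_{k+1}$. Let $\tilde y_k=\frac{1}{\sum_{i=1}^k\lambda_i}\sum_{i=1}^k\lambda_iy_i$. Then for integers $k\geq1$, \[ \textsc{gap}(\tilde y_k)=O(k^{-\frac{p+1}{2}}),\qquad \inf_{1\leq i\leq k}\|v_i\|=O(k^{-\frac p2}),\qquad \inf_{1\leq i\leq k}\epsilon_i=O(k^{-\frac{p+1}{2}}). \] In addition, if $\epsilon_k=0$ for all $k\geq1$ and the error bound condition holds (there exist $\delta,\kappa>0$ such that $\textsc{dist}(0,Ax)\leq\delta$ implies $\textsc{dist}(x,A^{-1}(0))\leq\kappa\,\textsc{dist}(0,Ax)$), then $\{x_k\}$ converges to $A^{-1}(0)$ at a local linear rate, i.e., there exist $k_0$ and $q\in(0,1)$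 with $\textsc{dist}(x_{k+1},A^{-1}(0))^2\leq q\,\textsc{dist}(x_k,A^{-1}(0))^2$ for all $k\geq k_0$.
   Context: The $\epsilon$-enlargement of $A$ is $A^{\epsilon}(x)=\{v\in\mathbb{R}^d:\langle x-\tilde x,v-\tilde v\rangle\geq-\epsilon\ \forall\tilde x\in\mathbb{R}^d,\ \forall\tilde v\in A\tilde x\}$. The gap function is $\textsc{gap}(x)=\sup_{z\in\mathrm{dom}(A)}\sup_{\xi\in Az}\langle\xi,x-z\rangle$; $\textsc{dist}(x,S)=\inf_{z\in S}\|x-z\|$. These sequences are the iterates of the paper's "conceptual algorithmic framework" (run without hitting the stopping test $0\in Ax_k$). *)

theory Defs
  imports "HOL-Analysis.Analysis"
begin

definition mono_op :: "('a::real_inner \<Rightarrow> 'a set) \<Rightarrow> bool" where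
  "mono_op A \<longleftrightarrow> (\<forall>x y u v. u \<in> A x \<longrightarrow> v \<in> A y \<longrightarrow> inner (x - y) (u - v) \<ge> 0)"

definition maximal_monotone :: "('a::real_inner \<Rightarrow> 'a set) \<Rightarrow> bool" where
  "maximal_monotone A \<longleftrightarrow> mono_op A \<and>
     (\<forall>x u. (\<forall>y v. v \<in> A y \<longrightarrow> inner (x - y) (u - v) \<ge> 0) \<longrightarrow> u \<in> A x)"

definition op_dom :: "('a \<Rightarrow> 'b set) \<Rightarrow> 'a set" where
  "op_dom A = {x. A x \<noteq> {}}"

definition zeros :: "('a \<Rightarrow> 'b::zero set) \<Rightarrow> 'a set" where
  "zeros A = {x. 0 \<in> A x}"

definition enlargement :: "('a::real_inner \<Rightarrow> 'a set) \<Rightarrow> real \<Rightarrow> 'a \<Rightarrow> 'a set" where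
  "enlargement A \<epsilon> x = {v. \<forall>x' v'. v' \<in> A x' \<longrightarrow> inner (x - x') (v - v') \<ge> - \<epsilon>}"

text \<open>Gap function, valued in the extended reals (the supremum may a priori be infinite).\<close>
definition gap :: "('a::real_inner \<Rightarrow> 'a set) \<Rightarrow> 'a \<Rightarrow> ereal" where
  "gap A x = (SUP z\<in>op_dom A. SUP \<xi>\<in>A z. ereal (inner \<xi> (x - z)))"

end

theory Submission
  imports Defs
begin

(* For xi in A z every
   step satisfies
     2 lam_{k+1} <xi, y_{k+1} - z> <= |x_k - z|^2 - |x_{k+1} - z|^2 - (1 - sigma^2) b_k^2,
   where b_k = |y_{k+1} - x_k|.  Taking for z a zero of A shows that the b_k^2 are summable, so some
   b_j^2 with j < k is O(1/k); the error criterion and the large-step condition bound |v_{j+1}| and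
   eps_{j+1} by powers of b_j.  Summed over the steps, the inequality telescopes to the bound
   |x_0 - z|^2 / (2 sum lam_i) for the gap of the ergodic mean, uniformly over the bounded domain,
   and Jensen's inequality applied to lam_{j+1} >= theta b_j^(1-p) gives sum lam_i >= c k^((p+1)/2).
   For the linear rate, b_k -> 0 brings v_{k+1} in A y_{k+1} into the range of the error bound, so
   that dist (x_k, zeros A) <= M b_k, and the inequality at the nearest zero then removes the
   fraction (1 - sigma^2)/M^2 of dist (x_k, zeros A)^2. *)

lemma powr_neg_ge_tangent:
  fixes s t m :: real
  assumes "s \<ge> 0" "t > 0" "m > 0"
  shows "m powr (-s) * (1 - s * (t / m - 1)) \<le> t powr (-s)"
proof -
  have "1 - s * (t / m - 1) \<le> 1 - s * ln (t / m)"
    using ln_le_minus_one[of "t / m"] assms by (simp add: mult_left_mono)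
  also have "\<dots> \<le> exp (- s * ln (t / m))"
    using exp_ge_add_one_self[of "- s * ln (t / m)"] by simp
  also have "\<dots> = (t / m) powr (-s)"
    using assms by (simp add: powr_def)
  finally have "m powr (-s) * (1 - s * (t / m - 1)) \<le> m powr (-s) * (t / m) powr (-s)"
    by (simp add: mult_left_mono)
  also have "\<dots> = t powr (-s)"
    using assms by (simp add: powr_divide)
  finally show ?thesis .
qed

lemma power_eq_powr_half:
  fixes b :: real
  assumes "b \<ge> 0" "n > 0"
  shows "b ^ n = (b\<^sup>2) powr (real n / 2)"
proof (cases "b = 0")
  case False
  then have "b > 0" using assms by simp
  then have "(b\<^sup>2) powr (real n / 2) = (b powr 2) powr (real n / 2)"
    by (simp add: powr_realpow)
  also have "\<dots> = b powr (real n)" by (simp add: powr_powr)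
  also have "\<dots> = b ^ n" using \<open>b > 0\<close> by (simp add: powr_realpow)
  finally show ?thesis by simp
qed (use assms in simp)

lemma powr_divide_nat:
  fixes S r :: real
  assumes "S \<ge> 0"
  shows "(S / real k) powr r = S powr r * real k powr (- r)"
proof -
  have "(S / real k) powr r = S powr r / real k powr r"
    using assms by (simp add: powr_divide)
  then show ?thesis by (simp add: powr_minus divide_inverse)
qed

lemma exists_le_average:
  fixes f :: "nat \<Rightarrow> real"
  assumes sum: "(\<Sum>j<k. f j) \<le> S" and "k > 0"
  shows "\<exists>j<k. f j \<le> S / real k"
proof (rule ccontr)
  assume "\<not> ?thesis"
  then have "(\<Sum>j<k. S / real k) < (\<Sum>j<k. f j)"
    using \<open>k > 0\<close> by (intro sum_strict_mono) (auto simp: not_le)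
  then show False
    using sum \<open>k > 0\<close> by simp
qed

(* Jensen's inequality for the convex function t \<mapsto> t powr (-s). *)
lemma sum_powr_neg_ge:
  fixes t :: "nat \<Rightarrow> real"
  assumes pos: "\<And>j. j < k \<Longrightarrow> t j > 0" and sum: "(\<Sum>j<k. t j) \<le> S"
    and "k > 0" "s \<ge> 0"
  shows "S powr (-s) * real k powr (s + 1) \<le> (\<Sum>j<k. t j powr (-s))"
proof -
  have "0 < (\<Sum>j<k. t j)"
    using pos \<open>k > 0\<close> by (intro sum_pos) auto
  then have "S > 0" using sum by linarith
  define m where "m = S / real k"
  have m: "m > 0" "S / m = real k"
    using \<open>S > 0\<close> \<open>k > 0\<close> by (auto simp: m_def)
  have "S powr (-s) * real k powr (s + 1) = m powr (-s) * real k"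
    using \<open>S > 0\<close> \<open>k > 0\<close> by (simp add: m_def powr_divide_nat powr_add)
  also have "\<dots> = m powr (-s) * (real k * (1 + s) - s * (S / m))"
    using m(2) by (simp add: algebra_simps)
  also have "\<dots> \<le> m powr (-s) * (real k * (1 + s) - s * ((\<Sum>j<k. t j) / m))"
    using sum m(1) \<open>s \<ge> 0\<close> by (simp add: mult_left_mono divide_right_mono)
  also have "\<dots> = (\<Sum>j<k. m powr (-s) * (1 - s * (t j / m - 1)))"
    by (simp add: sum_distrib_left sum_subtractf sum_divide_distrib[symmetric] algebra_simps)
  also have "\<dots> \<le> (\<Sum>j<k. t j powr (-s))"
    using pos m \<open>s \<ge> 0\<close> by (intro sum_mono powr_neg_ge_tangent) auto
  finally show ?thesis .
qed

lemma closed_zeros: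
  fixes A :: "'a::real_inner \<Rightarrow> 'a set"
  assumes "maximal_monotone A"
  shows "closed (zeros A)"
proof -
  have "zeros A = (\<Inter>(z, w)\<in>{(z, w). w \<in> A z}. {u. inner w u \<le> inner w z})"
  proof (intro set_eqI iffI)
    fix u assume "u \<in> zeros A"
    then show "u \<in> (\<Inter>(z, w)\<in>{(z, w). w \<in> A z}. {u. inner w u \<le> inner w z})"
      using assms unfolding maximal_monotone_def mono_op_def zeros_def
      by (force simp: inner_diff_left inner_diff_right inner_commute)
  next
    fix u assume "u \<in> (\<Inter>(z, w)\<in>{(z, w). w \<in> A z}. {u. inner w u \<le> inner w z})"
    then have "\<forall>z w. w \<in> A z \<longrightarrow> inner (u - z) (0 - w) \<ge> 0"
      by (force simp: inner_diff_left inner_diff_right inner_commute)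
    then show "u \<in> zeros A"
      using assms unfolding maximal_monotone_def zeros_def by blast
  qed
  then show ?thesis
    by (auto intro!: closed_INT closed_halfspace_le)
qed

lemma enlargement_zero_eq:
  assumes "maximal_monotone A"
  shows "enlargement A 0 x = A x"
proof (intro set_eqI iffI)
  fix v assume "v \<in> enlargement A 0 x"
  then have "\<forall>y w. w \<in> A y \<longrightarrow> 0 \<le> inner (x - y) (v - w)"
    by (simp add: enlargement_def)
  then show "v \<in> A x"
    using assms unfolding maximal_monotone_def by blast
next
  fix v assume "v \<in> A x"
  then have "0 \<le> inner (x - y) (v - w)" if "w \<in> A y" for y w
    using assms that unfolding maximal_monotone_def mono_op_def by blast
  then show "v \<in> enlargement A 0 x"
    by (simp add: enlargement_def)
qed

lemma bounded_sq_norm_diff_le: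
  fixes S :: "'a::real_normed_vector set"
  assumes "bounded S"
  obtains R where "R \<ge> 0" "\<And>z. z \<in> S \<Longrightarrow> (norm (a - z))\<^sup>2 \<le> R"
proof -
  obtain B where B: "\<And>z. z \<in> S \<Longrightarrow> norm z \<le> B"
    using assms unfolding bounded_iff by blast
  have "(norm (a - z))\<^sup>2 \<le> (norm a + B)\<^sup>2" if "z \<in> S" for z
    using B[OF that] norm_triangle_ineq4[of a z] by (intro power_mono) auto
  then show ?thesis
    using that[of "(norm a + B)\<^sup>2"] by simp
qed

lemma hpe_step_inequality:
  fixes a b c w z \<xi> :: "'a::real_inner"
  assumes update: "b = a - l *\<^sub>R w"
    and err: "(norm (l *\<^sub>R w + c - a))\<^sup>2 + 2 * l * e \<le> \<sigma>\<^sup>2 * (norm (c - a))\<^sup>2"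
    and enl: "- e \<le> inner (c - z) (w - \<xi>)"
    and "l > 0"
  shows "2 * l * inner \<xi> (c - z)
    \<le> (norm (a - z))\<^sup>2 - (norm (b - z))\<^sup>2 - (1 - \<sigma>\<^sup>2) * (norm (c - a))\<^sup>2"
proof -
  have "inner \<xi> (c - z) \<le> inner w (c - z) + e"
    using enl by (simp add: inner_diff_right inner_commute)
  then have "2 * l * inner \<xi> (c - z) \<le> 2 * l * inner w (c - z) + 2 * l * e"
    using mult_left_mono[of _ _ "2 * l"] \<open>l > 0\<close> by (fastforce simp: algebra_simps)
  moreover have "2 * l * inner w (c - z)
      = (norm (a - z))\<^sup>2 - (norm (b - z))\<^sup>2 + (norm (l *\<^sub>R w + c - a))\<^sup>2 - (norm (c - a))\<^sup>2"
    unfolding update power2_norm_eq_inner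
    by (simp add: inner_diff_left inner_diff_right inner_add_left inner_add_right
        inner_commute algebra_simps)
  ultimately show ?thesis
    using err by (simp add: algebra_simps)
qed

lemma hpe_scaled_norm_le:
  fixes a c w :: "'a::real_inner"
  assumes err: "(norm (l *\<^sub>R w + c - a))\<^sup>2 + 2 * l * e \<le> \<sigma>\<^sup>2 * (norm (c - a))\<^sup>2"
    and "l > 0" "e \<ge> 0" "\<sigma> > 0"
  shows "l * norm w \<le> (1 + \<sigma>) * norm (c - a)"
proof -
  have "0 \<le> 2 * l * e"
    using \<open>l > 0\<close> \<open>e \<ge> 0\<close> by simp
  then have "(norm (l *\<^sub>R w + c - a))\<^sup>2 \<le> (\<sigma> * norm (c - a))\<^sup>2"
    using err unfolding power_mult_distrib by linarith
  then have "norm (l *\<^sub>R w + c - a) \<le> \<sigma> * norm (c - a)"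
    using \<open>\<sigma> > 0\<close> by (meson power2_le_imp_le mult_nonneg_nonneg norm_ge_zero less_imp_le)
  moreover have "l * norm w \<le> norm (l *\<^sub>R w + c - a) + norm (c - a)"
    using norm_triangle_ineq4[of "l *\<^sub>R w + c - a" "c - a"] \<open>l > 0\<close> by simp
  ultimately show ?thesis
    by (simp add: algebra_simps)
qed

lemma hpe_norm_le:
  fixes a c w :: "'a::real_inner"
  assumes err: "(norm (l *\<^sub>R w + c - a))\<^sup>2 + 2 * l * e \<le> \<sigma>\<^sup>2 * (norm (c - a))\<^sup>2"
    and large_step: "\<theta> \<le> l * norm (c - a) ^ (p - 1)"
    and "l > 0" "e \<ge> 0" "\<sigma> > 0" "p \<ge> 1"
  shows "\<theta> * norm w \<le> (1 + \<sigma>) * norm (c - a) ^ p"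
proof -
  have "\<theta> * norm w \<le> norm (c - a) ^ (p - 1) * (l * norm w)"
    using mult_right_mono[OF large_step, of "norm w"] by (simp add: algebra_simps)
  also have "\<dots> \<le> norm (c - a) ^ (p - 1) * ((1 + \<sigma>) * norm (c - a))"
    using hpe_scaled_norm_le[OF err] assms(3-5) by (simp add: mult_left_mono)
  also have "\<dots> = (1 + \<sigma>) * norm (c - a) ^ (p - 1 + 1)"
    by (simp add: power_add)
  finally show ?thesis
    using \<open>p \<ge> 1\<close> by simp
qed

lemma hpe_eps_le:
  fixes a c w :: "'a::real_inner"
  assumes err: "(norm (l *\<^sub>R w + c - a))\<^sup>2 + 2 * l * e \<le> \<sigma>\<^sup>2 * (norm (c - a))\<^sup>2"
    and large_step: "\<theta> \<le> l * norm (c - a) ^ (p - 1)"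
    and "e \<ge> 0" "p \<ge> 1"
  shows "2 * \<theta> * e \<le> \<sigma>\<^sup>2 * norm (c - a) ^ (p + 1)"
proof -
  have "2 * \<theta> * e \<le> norm (c - a) ^ (p - 1) * (2 * l * e)"
    using mult_right_mono[OF large_step, of "2 * e"] \<open>e \<ge> 0\<close> by (simp add: algebra_simps)
  also have "\<dots> \<le> norm (c - a) ^ (p - 1) * (\<sigma>\<^sup>2 * (norm (c - a))\<^sup>2)"
  proof (rule mult_left_mono)
    have "0 \<le> (norm (l *\<^sub>R w + c - a))\<^sup>2"
      by simp
    then show "2 * l * e \<le> \<sigma>\<^sup>2 * (norm (c - a))\<^sup>2"
      using err by linarith
  qed simp
  also have "\<dots> = \<sigma>\<^sup>2 * norm (c - a) ^ (p - 1 + 2)"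
    by (simp add: power_add power2_eq_square)
  finally show ?thesis
    using \<open>p \<ge> 1\<close> by (simp add: numeral_2_eq_2)
qed

locale large_step_hpe =
  fixes A :: "'a::euclidean_space \<Rightarrow> 'a set"
    and p :: nat and \<sigma> \<theta> :: real
    and lam eps :: "nat \<Rightarrow> real"
    and x y v :: "nat \<Rightarrow> 'a"
  assumes maxmono: "maximal_monotone A"
    and zeros_ne: "zeros A \<noteq> {}"
    and p_ge: "p \<ge> 1"
    and sigma: "0 < \<sigma>" "\<sigma> < 1"
    and theta: "\<theta> > 0"
    and lam_pos: "\<And>k. k \<ge> 1 \<Longrightarrow> lam k > 0"
    and eps_nn: "\<And>k. k \<ge> 1 \<Longrightarrow> eps k \<ge> 0"
    and incl: "\<And>k. v (Suc k) \<in> enlargement A (eps (Suc k)) (y (Suc k))"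
    and err: "\<And>k. (norm (lam (Suc k) *\<^sub>R v (Suc k) + y (Suc k) - x k))\<^sup>2
                   + 2 * lam (Suc k) * eps (Suc k) \<le> \<sigma>\<^sup>2 * (norm (y (Suc k) - x k))\<^sup>2"
    and large_step: "\<And>k. lam (Suc k) * norm (y (Suc k) - x k) ^ (p - 1) \<ge> \<theta>"
    and update: "\<And>k. x (Suc k) = x k - lam (Suc k) *\<^sub>R v (Suc k)"
begin

definition step_len :: "nat \<Rightarrow> real" where
  "step_len k = norm (y (Suc k) - x k)"

lemma one_minus_sigma_sq_pos: "0 < 1 - \<sigma>\<^sup>2"
  using sigma by (simp add: power_less_one_iff)

lemma step_inequality:
  assumes "\<xi> \<in> A z"
  shows "2 * lam (Suc k) * inner \<xi> (y (Suc k) - z)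
    \<le> (norm (x k - z))\<^sup>2 - (norm (x (Suc k) - z))\<^sup>2 - (1 - \<sigma>\<^sup>2) * (step_len k)\<^sup>2"
proof -
  have "- eps (Suc k) \<le> inner (y (Suc k) - z) (v (Suc k) - \<xi>)"
    using incl[of k] assms unfolding enlargement_def by blast
  then show ?thesis
    unfolding step_len_def using lam_pos by (intro hpe_step_inequality[OF update err]) auto
qed

lemma fejer_step:
  assumes "z \<in> zeros A"
  shows "(norm (x (Suc k) - z))\<^sup>2 \<le> (norm (x k - z))\<^sup>2 - (1 - \<sigma>\<^sup>2) * (step_len k)\<^sup>2"
  using step_inequality[of 0 z k] assms by (simp add: zeros_def)

lemma sum_step_len_sq_le:
  assumes "z \<in> zeros A"
  shows "(\<Sum>j<N. (step_len j)\<^sup>2) \<le> (norm (x 0 - z))\<^sup>2 / (1 - \<sigma>\<^sup>2)"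
proof -
  have "(1 - \<sigma>\<^sup>2) * (\<Sum>j<N. (step_len j)\<^sup>2)
      \<le> (\<Sum>j<N. (norm (x j - z))\<^sup>2 - (norm (x (Suc j) - z))\<^sup>2)"
    unfolding sum_distrib_left
  proof (rule sum_mono)
    fix j
    show "(1 - \<sigma>\<^sup>2) * (step_len j)\<^sup>2 \<le> (norm (x j - z))\<^sup>2 - (norm (x (Suc j) - z))\<^sup>2"
      using fejer_step[OF assms, of j] by linarith
  qed
  also have "\<dots> = (norm (x 0 - z))\<^sup>2 - (norm (x N - z))\<^sup>2"
    by (rule sum_lessThan_telescope')
  also have "\<dots> \<le> (norm (x 0 - z))\<^sup>2"
    by simp
  finally show ?thesis
    using one_minus_sigma_sq_pos by (simp add: field_simps)
qed

lemma step_len_sq_bounded: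
  obtains S where "S > 0" "\<And>N. (\<Sum>j<N. (step_len j)\<^sup>2) \<le> S"
proof -
  obtain z where z: "z \<in> zeros A"
    using zeros_ne by blast
  let ?S = "(norm (x 0 - z))\<^sup>2 / (1 - \<sigma>\<^sup>2)"
  show ?thesis
  proof (rule that)
    show "?S + 1 > 0"
      using one_minus_sigma_sq_pos by (simp add: add_nonneg_pos)
    show "(\<Sum>j<N. (step_len j)\<^sup>2) \<le> ?S + 1" for N
      using sum_step_len_sq_le[OF z, of N] by linarith
  qed
qed

lemma step_len_power_rate:
  assumes "n > 0"
  shows "\<exists>C. \<forall>k\<ge>1. \<exists>j<k. step_len j ^ n \<le> C * real k powr (- real n / 2)"
proof -
  obtain S where S: "S > 0" "\<And>N. (\<Sum>j<N. (step_len j)\<^sup>2) \<le> S"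
    using step_len_sq_bounded by blast
  have "\<exists>j<k. step_len j ^ n \<le> S powr (real n / 2) * real k powr (- real n / 2)"
    if k: "k \<ge> 1" for k
  proof -
    obtain j where "j < k" and j: "(step_len j)\<^sup>2 \<le> S / real k"
      using exists_le_average[OF S(2), of k] k by fastforce
    have "step_len j ^ n = ((step_len j)\<^sup>2) powr (real n / 2)"
      using assms by (intro power_eq_powr_half) (auto simp: step_len_def)
    also have "\<dots> \<le> (S / real k) powr (real n / 2)"
      using j by (intro powr_mono2) auto
    also have "\<dots> = S powr (real n / 2) * real k powr (- real n / 2)"
      using S(1) by (simp add: powr_divide_nat)
    finally show ?thesis
      using \<open>j < k\<close> by blast
  qed
  then show ?thesis
    by blast
qed

lemma norm_v_le: "\<theta> * norm (v (Suc k)) \<le> (1 + \<sigma>) * step_len k ^ p"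
  unfolding step_len_def using lam_pos eps_nn sigma p_ge by (intro hpe_norm_le[OF err large_step]) auto

lemma eps_le: "2 * \<theta> * eps (Suc k) \<le> \<sigma>\<^sup>2 * step_len k ^ (p + 1)"
  unfolding step_len_def using eps_nn p_ge by (intro hpe_eps_le[OF err large_step]) auto

lemma INF_le_step_len_rate:
  assumes "n > 0" "c \<ge> 0"
    and bound: "\<And>j. f (Suc j) \<le> c * step_len j ^ n" and nonneg: "\<And>i. i \<ge> 1 \<Longrightarrow> f i \<ge> 0"
  shows "\<exists>C. \<forall>k\<ge>1. (INF i\<in>{1..k}. f i) \<le> C * real k powr (- real n / 2)"
proof -
  obtain C where C: "\<And>k. k \<ge> 1 \<Longrightarrow> \<exists>j<k. step_len j ^ n \<le> C * real k powr (- real n / 2)"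
    using step_len_power_rate[OF \<open>n > 0\<close>] by blast
  have "(INF i\<in>{1..k}. f i) \<le> c * C * real k powr (- real n / 2)" if k: "k \<ge> 1" for k
  proof -
    obtain j where "j < k" and j: "step_len j ^ n \<le> C * real k powr (- real n / 2)"
      using C[OF k] by blast
    have "(INF i\<in>{1..k}. f i) \<le> f (Suc j)"
      using \<open>j < k\<close> nonneg by (intro cINF_lower) (auto intro!: bdd_belowI[of _ 0])
    also have "\<dots> \<le> c * (C * real k powr (- real n / 2))"
      using bound[of j] mult_left_mono[OF j \<open>c \<ge> 0\<close>] by linarith
    finally show ?thesis
      by simp
  qed
  then show ?thesis
    by blast
qed

lemma min_norm_v_rate:
  "\<exists>C. \<forall>k\<ge>1. (INF i\<in>{1..k}. norm (v i)) \<le> C * real k powr (- real p / 2)"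
proof (rule INF_le_step_len_rate)
  show "norm (v (Suc j)) \<le> (1 + \<sigma>) / \<theta> * step_len j ^ p" for j
    using norm_v_le[of j] theta by (simp add: field_simps)
qed (use p_ge sigma theta in auto)

lemma min_eps_rate:
  "\<exists>C. \<forall>k\<ge>1. (INF i\<in>{1..k}. eps i) \<le> C * real k powr (- (real p + 1) / 2)"
proof -
  have "eps (Suc j) \<le> \<sigma>\<^sup>2 / (2 * \<theta>) * step_len j ^ (p + 1)" for j
    using eps_le[of j] theta by (simp add: field_simps)
  then show ?thesis
    using INF_le_step_len_rate[of "p + 1" "\<sigma>\<^sup>2 / (2 * \<theta>)" eps] eps_nn theta
    by (simp add: add.commute)
qed

lemma step_len_pos:
  assumes "p \<ge> 2"
  shows "step_len k > 0"
proof (rule ccontr)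
  assume "\<not> step_len k > 0"
  then have "step_len k = 0"
    by (simp add: step_len_def)
  moreover have "p - 1 \<noteq> 0"
    using assms by simp
  ultimately show False
    using large_step[of k] theta by (simp add: step_len_def power_0_left)
qed

lemma lam_ge_step_len_powr:
  assumes "p \<ge> 2"
  shows "\<theta> * ((step_len k)\<^sup>2) powr (- ((real p - 1) / 2)) \<le> lam (Suc k)"
proof -
  have b: "step_len k > 0"
    using step_len_pos[OF assms] .
  have "step_len k ^ (p - 1) = ((step_len k)\<^sup>2) powr ((real p - 1) / 2)"
    using power_eq_powr_half[of "step_len k" "p - 1"] b assms by (simp add: of_nat_diff)
  then have "\<theta> \<le> lam (Suc k) * ((step_len k)\<^sup>2) powr ((real p - 1) / 2)"
    using large_step[of k] by (simp add: step_len_def)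
  then show ?thesis
    using b by (simp add: powr_minus field_simps)
qed

lemma sum_lam_ge_of_step_len_sq_bound:
  assumes "p \<ge> 2" and S: "\<And>N. (\<Sum>j<N. (step_len j)\<^sup>2) \<le> S" and "k \<ge> 1"
  shows "\<theta> * S powr (- ((real p - 1) / 2)) * real k powr ((real p + 1) / 2) \<le> (\<Sum>i=1..k. lam i)"
proof -
  define s where "s = (real p - 1) / 2"
  have "s \<ge> 0" and s1: "s + 1 = (real p + 1) / 2"
    using assms(1) by (simp_all add: s_def field_simps)
  have pos: "(step_len j)\<^sup>2 > 0" for j
    using step_len_pos[OF \<open>p \<ge> 2\<close>, of j] by simp
  have "\<theta> * S powr (-s) * real k powr ((real p + 1) / 2)
      = \<theta> * (S powr (-s) * real k powr (s + 1))"
    by (simp add: s1)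
  also have "\<dots> \<le> \<theta> * (\<Sum>j<k. ((step_len j)\<^sup>2) powr (-s))"
    using pos S \<open>k \<ge> 1\<close> \<open>s \<ge> 0\<close> theta
    by (intro mult_left_mono sum_powr_neg_ge) auto
  also have "\<dots> \<le> (\<Sum>j<k. lam (Suc j))"
    unfolding sum_distrib_left s_def
    using lam_ge_step_len_powr[OF \<open>p \<ge> 2\<close>] by (intro sum_mono) simp
  also have "\<dots> = (\<Sum>i=1..k. lam i)"
    by (simp add: sum.atLeast1_atMost_eq)
  finally show ?thesis
    by (simp add: s_def)
qed

lemma sum_lam_lower_bound:
  obtains c where "c > 0" "\<And>k. k \<ge> 1 \<Longrightarrow> c * real k powr ((real p + 1) / 2) \<le> (\<Sum>i=1..k. lam i)"
proof (cases "p = 1")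
  \<comment> \<open>then step lengths may vanish, and the Jensen argument fails since \<open>0 powr 0 = 0\<close>\<close>
  case True
  have "\<theta> * real k powr ((real p + 1) / 2) \<le> (\<Sum>i=1..k. lam i)" if k: "k \<ge> 1" for k
  proof -
    have "(\<Sum>j<k. \<theta>) \<le> (\<Sum>j<k. lam (Suc j))"
      using large_step True by (intro sum_mono) simp
    then show ?thesis
      using True k by (simp add: sum.atLeast1_atMost_eq mult.commute)
  qed
  then show ?thesis
    using that theta by blast
next
  case False
  then have "p \<ge> 2"
    using p_ge by simp
  obtain S where "S > 0" "\<And>N. (\<Sum>j<N. (step_len j)\<^sup>2) \<le> S"
    using step_len_sq_bounded by blast
  then show ?thesis
    using that[of "\<theta> * S powr (- ((real p - 1) / 2))"] theta
      sum_lam_ge_of_step_len_sq_bound[OF \<open>p \<ge> 2\<close>] by simp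
qed

lemma weighted_gap_le:
  assumes "\<xi> \<in> A z"
  shows "(\<Sum>i=1..k. lam i * inner \<xi> (y i - z)) \<le> (norm (x 0 - z))\<^sup>2 / 2"
proof -
  have "2 * (\<Sum>i=1..k. lam i * inner \<xi> (y i - z))
      = (\<Sum>j<k. 2 * lam (Suc j) * inner \<xi> (y (Suc j) - z))"
    by (simp add: sum.atLeast1_atMost_eq sum_distrib_left mult.assoc)
  also have "\<dots> \<le> (\<Sum>j<k. (norm (x j - z))\<^sup>2 - (norm (x (Suc j) - z))\<^sup>2)"
  proof (rule sum_mono)
    fix j
    have "0 \<le> (1 - \<sigma>\<^sup>2) * (step_len j)\<^sup>2"
      using one_minus_sigma_sq_pos by simp
    then show "2 * lam (Suc j) * inner \<xi> (y (Suc j) - z)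
        \<le> (norm (x j - z))\<^sup>2 - (norm (x (Suc j) - z))\<^sup>2"
      using step_inequality[OF assms, of j] by linarith
  qed
  also have "\<dots> = (norm (x 0 - z))\<^sup>2 - (norm (x k - z))\<^sup>2"
    by (rule sum_lessThan_telescope')
  also have "\<dots> \<le> (norm (x 0 - z))\<^sup>2"
    by simp
  finally show ?thesis
    by simp
qed

lemma ergodic_gap_le:
  assumes "k \<ge> 1" and R: "\<And>z. z \<in> op_dom A \<Longrightarrow> (norm (x 0 - z))\<^sup>2 \<le> R"
  shows "gap A ((1 / (\<Sum>i=1..k. lam i)) *\<^sub>R (\<Sum>i=1..k. lam i *\<^sub>R y i))
    \<le> ereal (R / (2 * (\<Sum>i=1..k. lam i)))"
proof -
  define L where "L = (\<Sum>i=1..k. lam i)"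
  have "L > 0"
    unfolding L_def using assms(1) lam_pos by (intro sum_pos) auto
  have "inner \<xi> ((1 / L) *\<^sub>R (\<Sum>i=1..k. lam i *\<^sub>R y i) - z) \<le> R / (2 * L)"
    if z: "z \<in> op_dom A" and \<xi>: "\<xi> \<in> A z" for z \<xi>
  proof -
    have "(\<Sum>i=1..k. lam i *\<^sub>R (y i - z)) = (\<Sum>i=1..k. lam i *\<^sub>R y i) - L *\<^sub>R z"
      by (simp only: scaleR_diff_right sum_subtractf L_def scaleR_sum_left)
    then have "(1 / L) *\<^sub>R (\<Sum>i=1..k. lam i *\<^sub>R y i) - z
        = (1 / L) *\<^sub>R (\<Sum>i=1..k. lam i *\<^sub>R (y i - z))"
      using \<open>L > 0\<close> by (simp add: scaleR_diff_right)
    then have "inner \<xi> ((1 / L) *\<^sub>R (\<Sum>i=1..k. lam i *\<^sub>R y i) - z)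
        = (\<Sum>i=1..k. lam i * inner \<xi> (y i - z)) / L"
      by (simp add: inner_sum_right)
    also have "\<dots> \<le> (norm (x 0 - z))\<^sup>2 / 2 / L"
      using divide_right_mono[OF weighted_gap_le[OF \<xi>, of k], of L] \<open>L > 0\<close> by simp
    also have "\<dots> \<le> R / (2 * L)"
      using R[OF z] \<open>L > 0\<close> by (simp add: divide_right_mono)
    finally show ?thesis .
  qed
  then show ?thesis
    unfolding gap_def L_def[symmetric] by (intro SUP_least) simp
qed

lemma ergodic_gap_rate:
  assumes "bounded (op_dom A)"
  shows "\<exists>C. \<forall>k\<ge>1. gap A ((1 / (\<Sum>i=1..k. lam i)) *\<^sub>R (\<Sum>i=1..k. lam i *\<^sub>R y i))
    \<le> ereal (C * real k powr (- (real p + 1) / 2))"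
proof -
  obtain R where R: "R \<ge> 0" "\<And>z. z \<in> op_dom A \<Longrightarrow> (norm (x 0 - z))\<^sup>2 \<le> R"
    using bounded_sq_norm_diff_le[OF assms] by blast
  obtain c where c: "c > 0" "\<And>k. k \<ge> 1 \<Longrightarrow> c * real k powr ((real p + 1) / 2) \<le> (\<Sum>i=1..k. lam i)"
    using sum_lam_lower_bound by blast
  have "gap A ((1 / (\<Sum>i=1..k. lam i)) *\<^sub>R (\<Sum>i=1..k. lam i *\<^sub>R y i))
      \<le> ereal (R / (2 * c) * real k powr (- (real p + 1) / 2))" if k: "k \<ge> 1" for k
  proof -
    have "0 < c * real k powr ((real p + 1) / 2)"
      using c(1) k by simp
    then have "R / (2 * (\<Sum>i=1..k. lam i)) \<le> R / (2 * (c * real k powr ((real p + 1) / 2)))"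
      using c(2)[OF k] R(1) by (intro frac_le) auto
    also have "\<dots> = R / (2 * c) * real k powr (- (real p + 1) / 2)"
    proof -
      have "real k powr (- (real p + 1) / 2) = inverse (real k powr ((real p + 1) / 2))"
        unfolding minus_divide_left[symmetric] by (rule powr_minus)
      then show ?thesis
        by (simp add: field_simps)
    qed
    finally show ?thesis
      using ergodic_gap_le[OF k R(2)] by (meson ereal_less_eq(3) order_trans)
  qed
  then show ?thesis
    by blast
qed

lemma v_in_A_if_eps_zero:
  assumes "eps (Suc k) = 0"
  shows "v (Suc k) \<in> A (y (Suc k))"
  using incl[of k] assms enlargement_zero_eq[OF maxmono] by simp

lemma step_len_tendsto_zero: "step_len \<longlonglongrightarrow> 0"
proof -
  obtain S where "\<And>N. (\<Sum>j<N. (step_len j)\<^sup>2) \<le> S"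
    using step_len_sq_bounded by blast
  then have "summable (\<lambda>j. (step_len j)\<^sup>2)"
    by (intro summableI_nonneg_bounded) auto
  then have "(\<lambda>j. sqrt ((step_len j)\<^sup>2)) \<longlonglongrightarrow> sqrt 0"
    by (intro tendsto_real_sqrt summable_LIMSEQ_zero)
  then show ?thesis
    by (simp add: step_len_def[abs_def])
qed

lemma infdist_zeros_le_step_len:
  assumes exact: "eps (Suc k) = 0"
    and error_bound: "\<And>z. A z \<noteq> {} \<Longrightarrow> infdist 0 (A z) \<le> \<delta>
      \<Longrightarrow> infdist z (zeros A) \<le> \<kappa> * infdist 0 (A z)"
    and "\<kappa> > 0" and short: "step_len k \<le> 1" "(1 + \<sigma>) * step_len k \<le> \<delta> * \<theta>"
  shows "infdist (x k) (zeros A) \<le> (\<kappa> * (1 + \<sigma>) / \<theta> + 1) * step_len k"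
proof -
  let ?v = "v (Suc k)" and ?y = "y (Suc k)"
  have v_in: "?v \<in> A ?y"
    using v_in_A_if_eps_zero[OF exact] .
  have "(1 + \<sigma>) * step_len k ^ p \<le> (1 + \<sigma>) * step_len k ^ 1"
    using short(1) p_ge sigma by (intro mult_left_mono power_decreasing) (auto simp: step_len_def)
  then have v_le: "\<theta> * norm ?v \<le> (1 + \<sigma>) * step_len k"
    using norm_v_le[of k] by simp
  then have "\<theta> * norm ?v \<le> \<theta> * \<delta>"
    using short(2) by (simp add: mult.commute)
  then have "norm ?v \<le> \<delta>"
    using theta by simp
  have dist_Ay: "infdist 0 (A ?y) \<le> norm ?v"
    using infdist_le[OF v_in, of 0] by simp
  have "A ?y \<noteq> {}"
    using v_in by blast
  then have "infdist ?y (zeros A) \<le> \<kappa> * infdist 0 (A ?y)"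
    using error_bound dist_Ay \<open>norm ?v \<le> \<delta>\<close> by simp
  also have "\<dots> \<le> \<kappa> * norm ?v"
    using dist_Ay \<open>\<kappa> > 0\<close> by simp
  also have "\<dots> \<le> \<kappa> * ((1 + \<sigma>) / \<theta> * step_len k)"
    using v_le theta \<open>\<kappa> > 0\<close> by (intro mult_left_mono) (auto simp: field_simps)
  finally have "infdist ?y (zeros A) \<le> \<kappa> * (1 + \<sigma>) / \<theta> * step_len k"
    by simp
  moreover have "infdist (x k) (zeros A) \<le> infdist ?y (zeros A) + step_len k"
    using infdist_triangle[of "x k" "zeros A" ?y]
    by (simp add: step_len_def dist_norm norm_minus_commute)
  ultimately show ?thesis
    by (simp add: algebra_simps)
qed

lemma infdist_zeros_contraction:
  assumes "M > 0" and close: "infdist (x k) (zeros A) \<le> M * step_len k"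
  shows "(infdist (x (Suc k)) (zeros A))\<^sup>2
    \<le> (1 - (1 - \<sigma>\<^sup>2) / M\<^sup>2) * (infdist (x k) (zeros A))\<^sup>2"
proof -
  obtain z where z: "z \<in> zeros A" "infdist (x k) (zeros A) = dist (x k) z"
    using infdist_attains_inf[OF closed_zeros[OF maxmono] zeros_ne] by blast
  define D where "D = infdist (x k) (zeros A)"
  have "D\<^sup>2 \<le> (M * step_len k)\<^sup>2"
    using close by (intro power_mono) (auto simp: D_def infdist_nonneg)
  then have D_le: "D\<^sup>2 / M\<^sup>2 \<le> (step_len k)\<^sup>2"
    using \<open>M > 0\<close> by (simp add: field_simps power_mult_distrib)
  have "(infdist (x (Suc k)) (zeros A))\<^sup>2 \<le> (norm (x (Suc k) - z))\<^sup>2"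
    using infdist_le[OF z(1), of "x (Suc k)"]
    by (intro power_mono) (auto simp: dist_norm infdist_nonneg)
  also have "\<dots> \<le> D\<^sup>2 - (1 - \<sigma>\<^sup>2) * (step_len k)\<^sup>2"
    using fejer_step[OF z(1), of k] z(2) by (simp add: D_def dist_norm)
  also have "\<dots> \<le> D\<^sup>2 - (1 - \<sigma>\<^sup>2) * (D\<^sup>2 / M\<^sup>2)"
    using mult_left_mono[OF D_le, of "1 - \<sigma>\<^sup>2"] one_minus_sigma_sq_pos by simp
  also have "\<dots> = (1 - (1 - \<sigma>\<^sup>2) / M\<^sup>2) * D\<^sup>2"
    by (simp add: algebra_simps)
  finally show ?thesis
    by (simp add: D_def)
qed

lemma contraction_factor_bounds:
  assumes "M \<ge> 1"
  shows "0 < 1 - (1 - \<sigma>\<^sup>2) / M\<^sup>2" and "1 - (1 - \<sigma>\<^sup>2) / M\<^sup>2 < 1"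
proof -
  have "M\<^sup>2 \<ge> 1" "M \<noteq> 0"
    using assms by (simp_all add: one_le_power)
  then have "(1 - \<sigma>\<^sup>2) / M\<^sup>2 \<le> 1 - \<sigma>\<^sup>2"
    using divide_left_mono[of 1 "M\<^sup>2" "1 - \<sigma>\<^sup>2"] one_minus_sigma_sq_pos by simp
  moreover have "0 < (1 - \<sigma>\<^sup>2) / M\<^sup>2"
    using \<open>M\<^sup>2 \<ge> 1\<close> one_minus_sigma_sq_pos by (intro divide_pos_pos) auto
  moreover have "0 < \<sigma>\<^sup>2"
    using sigma by simp
  ultimately show "0 < 1 - (1 - \<sigma>\<^sup>2) / M\<^sup>2" and "1 - (1 - \<sigma>\<^sup>2) / M\<^sup>2 < 1"
    by linarith+
qed

lemma linear_rate:
  assumes exact: "\<forall>k\<ge>1. eps k = 0"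
    and error_bound: "\<exists>\<delta> \<kappa>. \<delta> > 0 \<and> \<kappa> > 0 \<and>
      (\<forall>z. A z \<noteq> {} \<and> infdist 0 (A z) \<le> \<delta> \<longrightarrow> infdist z (zeros A) \<le> \<kappa> * infdist 0 (A z))"
  shows "\<exists>k0. \<exists>q. 0 < q \<and> q < 1 \<and>
    (\<forall>k\<ge>k0. (infdist (x (Suc k)) (zeros A))\<^sup>2 \<le> q * (infdist (x k) (zeros A))\<^sup>2)"
proof -
  obtain \<delta> \<kappa> where "\<delta> > 0" "\<kappa> > 0" and EB: "\<And>z. A z \<noteq> {} \<Longrightarrow> infdist 0 (A z) \<le> \<delta>
      \<Longrightarrow> infdist z (zeros A) \<le> \<kappa> * infdist 0 (A z)"
    using error_bound by blast
  define M where "M = \<kappa> * (1 + \<sigma>) / \<theta> + 1"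
  define q where "q = 1 - (1 - \<sigma>\<^sup>2) / M\<^sup>2"
  have "M \<ge> 1"
    using \<open>\<kappa> > 0\<close> sigma theta by (simp add: M_def)
  then have q: "0 < q" "q < 1"
    unfolding q_def by (rule contraction_factor_bounds)+
  have "0 < min 1 (\<delta> * \<theta> / (1 + \<sigma>))"
    using \<open>\<delta> > 0\<close> theta sigma by simp
  then obtain k0 where k0: "\<And>k. k \<ge> k0 \<Longrightarrow> step_len k < min 1 (\<delta> * \<theta> / (1 + \<sigma>))"
    using order_tendstoD(2)[OF step_len_tendsto_zero] unfolding eventually_sequentially by blast
  have "(infdist (x (Suc k)) (zeros A))\<^sup>2 \<le> q * (infdist (x k) (zeros A))\<^sup>2" if "k \<ge> k0" for k
  proof -
    have "step_len k \<le> 1" "step_len k * (1 + \<sigma>) < \<delta> * \<theta>"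
      using k0[OF that] sigma by (simp_all add: pos_less_divide_eq)
    then have "infdist (x k) (zeros A) \<le> M * step_len k"
      unfolding M_def using exact EB \<open>\<kappa> > 0\<close>
      by (intro infdist_zeros_le_step_len) (auto simp: mult.commute)
    then show ?thesis
      unfolding q_def using \<open>M \<ge> 1\<close> by (intro infdist_zeros_contraction) auto
  qed
  then show ?thesis
    using q by blast
qed

end

theorem theorem4p1:
  fixes A :: "'a::euclidean_space \<Rightarrow> 'a set"
    and p :: nat and \<sigma> \<theta> :: real
    and lam eps :: "nat \<Rightarrow> real"
    and x y v :: "nat \<Rightarrow> 'a"
  assumes maxmono: "maximal_monotone A"
    and zeros_ne: "zeros A \<noteq> {}"
    and dom_closed: "closed (op_dom A)"
    and dom_bounded: "bounded (op_dom A)"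
    and p_ge: "p \<ge> 1"
    and sigma: "0 < \<sigma>" "\<sigma> < 1"
    and theta: "\<theta> > 0"
    and lam_pos: "\<And>k. k \<ge> 1 \<Longrightarrow> lam k > 0"
    and eps_nn: "\<And>k. k \<ge> 1 \<Longrightarrow> eps k \<ge> 0"
    and incl: "\<And>k. v (Suc k) \<in> enlargement A (eps (Suc k)) (y (Suc k))"
    and err: "\<And>k. (norm (lam (Suc k) *\<^sub>R v (Suc k) + y (Suc k) - x k))\<^sup>2
                   + 2 * lam (Suc k) * eps (Suc k) \<le> \<sigma>\<^sup>2 * (norm (y (Suc k) - x k))\<^sup>2"
    and large_step: "\<And>k. lam (Suc k) * norm (y (Suc k) - x k) ^ (p - 1) \<ge> \<theta>"
    and update: "\<And>k. x (Suc k) = x k - lam (Suc k) *\<^sub>R v (Suc k)"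
  shows "(\<exists>C. \<forall>k\<ge>1. gap A ((1 / (\<Sum>i=1..k. lam i)) *\<^sub>R (\<Sum>i=1..k. lam i *\<^sub>R y i))
              \<le> ereal (C * real k powr (- (real p + 1) / 2)))
       \<and> (\<exists>C. \<forall>k\<ge>1. (INF i\<in>{1..k}. norm (v i)) \<le> C * real k powr (- real p / 2))
       \<and> (\<exists>C. \<forall>k\<ge>1. (INF i\<in>{1..k}. eps i) \<le> C * real k powr (- (real p + 1) / 2))
       \<and> ((\<forall>k\<ge>1. eps k = 0) \<and>
          (\<exists>\<delta> \<kappa>. \<delta> > 0 \<and> \<kappa> > 0 \<and>
             (\<forall>z. A z \<noteq> {} \<and> infdist 0 (A z) \<le> \<delta> \<longrightarrow>
                  infdist z (zeros A) \<le> \<kappa> * infdist 0 (A z)))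
          \<longrightarrow> (\<exists>k0. \<exists>q. 0 < q \<and> q < 1 \<and>
                 (\<forall>k\<ge>k0. (infdist (x (Suc k)) (zeros A))\<^sup>2 \<le> q * (infdist (x k) (zeros A))\<^sup>2)))"
proof -
  interpret large_step_hpe A p \<sigma> \<theta> lam eps x y v
    using maxmono zeros_ne p_ge sigma theta lam_pos eps_nn incl err large_step update
    by unfold_locales auto
  show ?thesis
    using ergodic_gap_rate[OF dom_bounded] min_norm_v_rate min_eps_rate linear_rate by blast
qed

end
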